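(* Consider the dynamical system $X(t+1)=\operatorname{diag}(|X(t)|\mathbf{1}_n)^{-1}X(t)X(t)^{\top}$ on the domain $\mathcal{S}_{\mathrm{nz\text{-}row}}$, i.e., the map $f_{\mathrm{HbM}}(X)=\operatorname{diag}(|X|\mathbf{1}_n)^{-1}XX^{\top}$. Define $Q_{\mathrm{HbM}}$ as the set of matrices $PYP^{\top}\in\mathcal{S}_{\mathrm{nz\text{-}row}}$ where $P$ is an $n\times n$ permutation matrix and $Y$ is a block diagonal matrix each of whose diagonal blocks has the form $\alpha bb^{\top}$ with $\alpha>0$ and $b\in\{-1,+1\}^m$, $m\le n$ (different blocks may have different $\alpha$, $b$, $m$, with block sizes summing to $n$). Then: (i) $Q_{\mathrm{HbM}}$ is the set of all fixed points of $f_{\mathrm{HbM}}$ in $\mathcal{S}_{\mathrm{nz\text{-}row}}$; (ii) for every $X\in Q_{\mathrm{HbM}}$, $G(X)$ is composed of isolated complete subgraphs that satisfy social balance, i.e., there is a partition of $\{1,\dots,n\}$ into sets $V_1,\dots,V_K$ such that $X_{ij}=0$ whenever $i,j$ lie in different sets, and for each $k$ the principal submatrix of $X$ indexed by $V_k$ has all entries non-zero and its graph satisfies social balance.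
   Context: $\mathcal{S}_{\mathrm{nz\text{-}row}}=\{X\in\mathbb{R}^{n\times n}: \text{every row of }X\text{ is non-zero}\}$. $|X|$ is the entry-wise absolute value and $\mathbf{1}_n$ the all-ones vector. $G(X)$ is the weighted digraph with (possibly negative) adjacency matrix $X$. For a square matrix $Z$, $G(Z)$ satisfies social balance if (S1) $Z_{ii}>0$ for all $i$ and (S2) $\operatorname{sign}(Z_{ij})\operatorname{sign}(Z_{jk})\operatorname{sign}(Z_{ki})=1$ for all indices $i,j,k$, where $\operatorname{sign}$ is the sign function. *)

theory Defs
  imports "Jordan_Normal_Form.Matrix" "Jordan_Normal_Form.DL_Submatrix" "HOL-Library.Disjoint_Sets"
begin

definition S_nzrow :: "nat \<Rightarrow> real mat set" where
  "S_nzrow n = {X \<in> carrier_mat n n. \<forall>i<n. row X i \<noteq> 0\<^sub>v n}"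

definition diag_of_vec :: "real vec \<Rightarrow> real mat" where
  "diag_of_vec d = mat (dim_vec d) (dim_vec d) (\<lambda>(i,j). if i = j then d $ i else 0)"

definition abs_mat :: "real mat \<Rightarrow> real mat" where
  "abs_mat X = map_mat abs X"

text \<open>f_HbM(X) = diag(|X| 1_n)^{-1} X X^T; the inverse of a diagonal matrix with
  non-zero diagonal is the diagonal matrix of reciprocals.\<close>
definition f_HbM :: "real mat \<Rightarrow> real mat" where
  "f_HbM X = diag_of_vec (map_vec inverse (abs_mat X *\<^sub>v vec (dim_row X) (\<lambda>_. 1))) * X * X\<^sup>T"

definition perm_mat :: "nat \<Rightarrow> (nat \<Rightarrow> nat) \<Rightarrow> real mat" where
  "perm_mat n p = mat n n (\<lambda>(i,j). if p i = j then 1 else 0)"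

definition is_perm_mat :: "nat \<Rightarrow> real mat \<Rightarrow> bool" where
  "is_perm_mat n P \<longleftrightarrow> (\<exists>p. p permutes {..<n} \<and> P = perm_mat n p)"

definition is_hbm_block :: "real mat \<Rightarrow> bool" where
  "is_hbm_block B \<longleftrightarrow> (\<exists>\<alpha> b. \<alpha> > 0 \<and> (\<forall>i<dim_vec b. b $ i = 1 \<or> b $ i = -1) \<and>
      B = \<alpha> \<cdot>\<^sub>m (mat (dim_vec b) (dim_vec b) (\<lambda>(i,j). b $ i * b $ j)))"

definition Q_HbM :: "nat \<Rightarrow> real mat set" where
  "Q_HbM n = {X. \<exists>P Bs. is_perm_mat n P \<and> (\<forall>B\<in>set Bs. is_hbm_block B \<and> dim_row B \<le> n)
      \<and> sum_list (map dim_row Bs) = n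
      \<and> X = P * diag_block_mat Bs * P\<^sup>T \<and> X \<in> S_nzrow n}"

definition social_balance :: "real mat \<Rightarrow> bool" where
  "social_balance Z \<longleftrightarrow> (\<forall>i<dim_row Z. Z $$ (i,i) > 0) \<and>
     (\<forall>i<dim_row Z. \<forall>j<dim_row Z. \<forall>k<dim_row Z.
        sgn (Z $$ (i,j)) * sgn (Z $$ (j,k)) * sgn (Z $$ (k,i)) = 1)"

end

theory Submission
  imports Defs
begin

text \<open>Write \<open>d\<^sub>i = \<Sum>\<^sub>k \<bar>X\<^sub>i\<^sub>k\<bar>\<close> and \<open>M = X X\<^sup>T\<close>. A fixed point satisfies \<open>M\<^sub>i\<^sub>j = d\<^sub>i X\<^sub>i\<^sub>j\<close>, hence
  \<open>\<Sum>\<^sub>j M\<^sub>i\<^sub>j\<^sup>2 = d\<^sub>i\<^sup>2 M\<^sub>i\<^sub>i\<close> and \<open>\<Sum>\<^sub>j \<bar>M\<^sub>i\<^sub>j\<bar> = d\<^sub>i\<^sup>2\<close>. Summing \<open>\<Sum>\<^sub>j M\<^sub>i\<^sub>j\<^sup>2 = M\<^sub>i\<^sub>i \<Sum>\<^sub>j \<bar>M\<^sub>i\<^sub>j\<bar>\<close> over \<open>i\<close>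
  and using the symmetry of \<open>M\<close> gives \<open>\<Sum>\<^sub>i\<^sub>j \<bar>M\<^sub>i\<^sub>j\<bar> \<parallel>x\<^sub>i - sgn M\<^sub>i\<^sub>j x\<^sub>j\<parallel>\<^sup>2 = 0\<close> for the rows \<open>x\<^sub>i\<close>,
  so any two rows are either orthogonal or equal up to sign. Grouping the rows into classes up to
  sign exhibits \<open>X\<close> as a permuted block diagonal matrix with blocks \<open>\<alpha> b b\<^sup>T\<close>; conversely such
  matrices are fixed points by direct computation, and their blocks are balanced because the sign
  of every entry is a product \<open>b\<^sub>i b\<^sub>j\<close>.\<close>

section \<open>Matrix entries\<close>

lemma abs_eq_1_mult_self: "\<bar>x :: real\<bar> = 1 \<Longrightarrow> x * x = 1"
  by (metis abs_mult_self_eq mult_1_right)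

lemma f_HbM_index:
  assumes X: "X \<in> carrier_mat n n" and i: "i < n" and j: "j < n"
  shows "f_HbM X $$ (i,j) = (\<Sum>k<n. X $$ (i,k) * X $$ (j,k)) / (\<Sum>k<n. \<bar>X $$ (i,k)\<bar>)"
proof -
  define D where "D = diag_of_vec (map_vec inverse (abs_mat X *\<^sub>v vec n (\<lambda>_. 1)))"
  have D: "D \<in> carrier_mat n n" using X by (simp add: D_def diag_of_vec_def abs_mat_def)
  have DX: "(D * X) $$ (i,k) = X $$ (i,k) / (\<Sum>l<n. \<bar>X $$ (i,l)\<bar>)" if "k < n" for k
    using X D i that
    by (simp add: D_def diag_of_vec_def abs_mat_def scalar_prod_def lessThan_atLeast0
        if_distrib[of "\<lambda>x. x * _"] sum.If_cases divide_inverse_commute cong: if_cong)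
  have "f_HbM X = D * X * X\<^sup>T" using X by (simp add: f_HbM_def D_def)
  also have "\<dots> $$ (i,j) = (\<Sum>k<n. (D * X) $$ (i,k) * X $$ (j,k))"
    using D X i j by (subst index_mult_mat(1)) (auto simp: scalar_prod_def lessThan_atLeast0)
  finally show ?thesis
    using DX by (simp add: sum_divide_distrib)
qed

lemma perm_mat_conj_index:
  assumes p: "p permutes {..<n}" and Y: "Y \<in> carrier_mat n n" and i: "i < n" and j: "j < n"
  shows "(perm_mat n p * Y * (perm_mat n p)\<^sup>T) $$ (i,j) = Y $$ (p i, p j)"
proof -
  define P where "P = perm_mat n p"
  have P: "P \<in> carrier_mat n n" by (simp add: P_def perm_mat_def)
  have p_n: "p k < n" if "k < n" for k using permutes_in_image[OF p] that by auto
  have P_index: "P $$ (k,l) = (if p k = l then 1 else 0)" if "k < n" "l < n" for k l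
    using that by (simp add: P_def perm_mat_def)
  have PY: "(P * Y) $$ (i,l) = Y $$ (p i, l)" if "l < n" for l
    using P Y i that p_n[OF i]
    by (simp add: P_index scalar_prod_def if_distrib[of "\<lambda>x. x * _"] cong: if_cong)
  have "(P * Y * P\<^sup>T) $$ (i,j) = (\<Sum>l\<in>{0..<n}. (P * Y) $$ (i,l) * P $$ (j,l))"
    using P Y i j by (subst index_mult_mat(1)) (auto simp: scalar_prod_def)
  also have "\<dots> = (\<Sum>l\<in>{0..<n}. if l = p j then Y $$ (p i, l) else 0)"
    using j by (intro sum.cong) (auto simp: PY P_index)
  also have "\<dots> = Y $$ (p i, p j)"
    using p_n[OF j] by simp
  finally show ?thesis unfolding P_def .
qed

lemma submatrix_square_index:
  assumes X: "X \<in> carrier_mat n n" and W: "W \<subseteq> {..<n}"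
  shows "dim_row (submatrix X W W) = card W"
    and "k < card W \<Longrightarrow> l < card W \<Longrightarrow> submatrix X W W $$ (k,l) = X $$ (pick W k, pick W l)"
proof -
  have rows: "{i. i < dim_row X \<and> i \<in> W} = W" and cols: "{i. i < dim_col X \<and> i \<in> W} = W"
    using X W by auto
  show "dim_row (submatrix X W W) = card W" by (simp add: dim_submatrix rows)
  show "k < card W \<Longrightarrow> l < card W \<Longrightarrow> submatrix X W W $$ (k,l) = X $$ (pick W k, pick W l)"
    by (rule submatrix_index) (simp_all add: rows cols)
qed

lemma diag_block_mat_hbm_carrier:
  assumes "\<forall>B\<in>set Bs. is_hbm_block B"
  shows "diag_block_mat Bs \<in> carrier_mat (sum_list (map dim_row Bs)) (sum_list (map dim_row Bs))"
proof -
  have "dim_col B = dim_row B" if "B \<in> set Bs" for B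
    using assms that unfolding is_hbm_block_def by force
  then have cols: "map dim_col Bs = map dim_row Bs" by (simp cong: map_cong)
  show ?thesis by (rule carrier_matI) (simp_all only: dim_diag_block_mat cols)
qed

lemma diag_block_mat_Cons_index:
  assumes B: "B \<in> carrier_mat m m" and D: "diag_block_mat Bs \<in> carrier_mat N N"
    and k: "k < m + N" and l: "l < m + N"
  shows "diag_block_mat (B # Bs) $$ (k,l) =
    (if k < m \<and> l < m then B $$ (k,l)
     else if m \<le> k \<and> m \<le> l then diag_block_mat Bs $$ (k - m, l - m) else 0)"
  using B D k l by (auto simp: Let_def)

lemma is_hbm_block_signed_rank_one:
  assumes "\<alpha> > 0" and t: "\<And>k. k < m \<Longrightarrow> \<bar>t k\<bar> = 1"
  shows "is_hbm_block (mat m m (\<lambda>(k,l). \<alpha> * t k * t l))"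
  unfolding is_hbm_block_def
proof (intro exI[of _ \<alpha>] exI[of _ "vec m t"] conjI allI impI)
  fix k assume "k < dim_vec (vec m t)"
  then show "vec m t $ k = 1 \<or> vec m t $ k = -1" using t[of k] by (auto simp: abs_if split: if_splits)
qed (use assms(1) in auto)

lemma social_balance_signed_rank_one:
  fixes Z :: "real mat"
  assumes a: "a > 0" and t: "\<And>k. k < dim_row Z \<Longrightarrow> \<bar>t k\<bar> = 1"
    and Z: "\<And>k l. k < dim_row Z \<Longrightarrow> l < dim_row Z \<Longrightarrow> Z $$ (k,l) = a * t k * t l"
  shows "social_balance Z"
proof -
  have sgn_Z: "sgn (Z $$ (k,l)) = t k * t l" if "k < dim_row Z" "l < dim_row Z" for k l
    using a t[OF that(1)] t[OF that(2)] by (auto simp: Z[OF that] sgn_mult abs_if split: if_splits)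
  have tt: "t k * t k = 1" if "k < dim_row Z" for k by (rule abs_eq_1_mult_self[OF t[OF that]])
  show ?thesis unfolding social_balance_def
  proof (intro conjI allI impI)
    fix k assume "k < dim_row Z"
    then show "Z $$ (k,k) > 0" using a by (simp add: Z mult.assoc tt)
  next
    fix i j k assume "i < dim_row Z" "j < dim_row Z" "k < dim_row Z"
    then show "sgn (Z $$ (i,j)) * sgn (Z $$ (j,k)) * sgn (Z $$ (k,i)) = 1"
      by (simp add: sgn_Z) (metis (no_types, lifting) mult.assoc mult.commute mult_1_right tt)
  qed
qed

lemma bij_betw_shift_combine:
  fixes m N :: nat
  assumes e: "bij_betw e {..<m} C" and q: "bij_betw q {..<N} R" and "C \<inter> R = {}"
  shows "bij_betw (\<lambda>k. if k < m then e k else q (k - m)) {..<m + N} (C \<union> R)"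
proof -
  have "bij_betw (\<lambda>k. k - m) {m..<m + N} {..<N}"
    by (rule bij_betw_byWitness[where f' = "\<lambda>k. k + m"]) auto
  then have "bij_betw (\<lambda>k. if k < m then e k else q (k - m)) {m..<m + N} R"
    by (subst bij_betw_cong[where g = "q \<circ> (\<lambda>k. k - m)"]) (auto intro: bij_betw_trans q)
  moreover have "bij_betw (\<lambda>k. if k < m then e k else q (k - m)) {..<m} C"
    using e by (subst bij_betw_cong[where g = e]) auto
  ultimately have "bij_betw (\<lambda>k. if k < m then e k else q (k - m)) ({..<m} \<union> {m..<m + N}) (C \<union> R)"
    using assms(3) by (intro bij_betw_combine) auto
  moreover have "{..<m} \<union> {m..<m + N} = {..<m + N}" by auto
  ultimately show ?thesis by simp
qed

section \<open>Signed clusters\<close>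

text \<open>The labels \<open>c\<close> cut the indices into clusters, and cluster \<open>r\<close> carries the block
  \<open>\<alpha> r \<cdot> b b\<^sup>T\<close> whose sign vector \<open>b\<close> is read off from \<open>s\<close>: this is \<open>P Y P\<^sup>T\<close> without an
  ordering of the indices.\<close>
definition signed_clustered :: "nat \<Rightarrow> real mat \<Rightarrow> bool" where
  "signed_clustered n X \<longleftrightarrow> (\<exists>(c :: nat \<Rightarrow> nat) \<alpha> s. \<forall>i<n. \<alpha> (c i) > 0 \<and> \<bar>s i\<bar> = 1 \<and>
     (\<forall>j<n. X $$ (i,j) = (if c i = c j then \<alpha> (c i) * s i * s j else 0)))"

lemma signed_clusteredI:
  fixes c :: "nat \<Rightarrow> nat"
  assumes "\<And>i. i < n \<Longrightarrow> \<alpha> (c i) > 0" and "\<And>i. i < n \<Longrightarrow> \<bar>s i\<bar> = 1"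
    and "\<And>i j. i < n \<Longrightarrow> j < n \<Longrightarrow> X $$ (i,j) = (if c i = c j then \<alpha> (c i) * s i * s j else 0)"
  shows "signed_clustered n X"
  unfolding signed_clustered_def using assms by blast

lemma signed_clusteredE:
  assumes "signed_clustered n X"
  obtains \<alpha> and c :: "nat \<Rightarrow> nat" and s where "\<And>i. i < n \<Longrightarrow> \<alpha> (c i) > 0"
    and "\<And>i. i < n \<Longrightarrow> \<bar>s i\<bar> = 1"
    and "\<And>i j. i < n \<Longrightarrow> j < n \<Longrightarrow> X $$ (i,j) = (if c i = c j then \<alpha> (c i) * s i * s j else 0)"
  using assms unfolding signed_clustered_def by blast

lemma S_nzrowI_diag:
  assumes X: "X \<in> carrier_mat n n" and diag: "\<And>i. i < n \<Longrightarrow> X $$ (i,i) \<noteq> 0"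
  shows "X \<in> S_nzrow n"
  unfolding S_nzrow_def
proof (intro CollectI conjI allI impI X notI)
  fix i assume i: "i < n" and "row X i = 0\<^sub>v n"
  then have "X $$ (i,i) = 0" using X by (metis carrier_matD index_row(1) index_zero_vec(1))
  with diag[OF i] show False by contradiction
qed

lemma signed_clustered_f_HbM_fixed:
  assumes X: "X \<in> carrier_mat n n" and "signed_clustered n X"
  shows "X \<in> S_nzrow n" and "f_HbM X = X"
proof -
  obtain \<alpha> and c :: "nat \<Rightarrow> nat" and s where \<alpha>: "\<And>i. i < n \<Longrightarrow> \<alpha> (c i) > 0"
    and s: "\<And>i. i < n \<Longrightarrow> \<bar>s i\<bar> = 1"
    and X_index: "\<And>i j. i < n \<Longrightarrow> j < n \<Longrightarrow> X $$ (i,j) = (if c i = c j then \<alpha> (c i) * s i * s j else 0)"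
    using assms(2) by (elim signed_clusteredE) blast
  define C where "C i = {k\<in>{..<n}. c k = c i}" for i
  have abs_sum: "(\<Sum>k<n. \<bar>X $$ (i,k)\<bar>) = \<alpha> (c i) * card (C i)" if i: "i < n" for i
  proof -
    have "(\<Sum>k<n. \<bar>X $$ (i,k)\<bar>) = (\<Sum>k<n. if c k = c i then \<alpha> (c i) else 0)"
      using i \<alpha>[OF i] s by (intro sum.cong) (auto simp: X_index abs_mult)
    then show ?thesis by (simp add: sum.If_cases C_def Int_def)
  qed
  have inner_sum: "(\<Sum>k<n. X $$ (i,k) * X $$ (j,k)) =
      (if c i = c j then \<alpha> (c i) * \<alpha> (c i) * s i * s j * card (C i) else 0)"
    if i: "i < n" and j: "j < n" for i j
  proof -
    have "(\<Sum>k<n. X $$ (i,k) * X $$ (j,k)) =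
        (\<Sum>k<n. if c k = c i then (if c i = c j then \<alpha> (c i) * \<alpha> (c i) * s i * s j else 0) else 0)"
      using i j abs_eq_1_mult_self[OF s] by (intro sum.cong) (auto simp: X_index algebra_simps)
    then show ?thesis by (simp add: sum.If_cases C_def Int_def)
  qed
  show "f_HbM X = X"
  proof (rule eq_matI)
    fix i j assume "i < dim_row X" "j < dim_col X"
    then have i: "i < n" and j: "j < n" using X by auto
    have "card (C i) > 0" using i by (auto simp: C_def card_gt_0_iff)
    then show "f_HbM X $$ (i,j) = X $$ (i,j)"
      using \<alpha>[OF i] by (simp add: f_HbM_index[OF X i j] abs_sum[OF i] inner_sum[OF i j] X_index[OF i j])
  qed (use X in \<open>simp_all add: f_HbM_def diag_of_vec_def abs_mat_def\<close>)
  have "X $$ (i,i) \<noteq> 0" if "i < n" for i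
    using \<alpha>[OF that] s[OF that] by (simp add: X_index[OF that that])
  then show "X \<in> S_nzrow n" by (rule S_nzrowI_diag[OF X])
qed

lemma signed_clustered_balanced_partition:
  assumes X: "X \<in> carrier_mat n n" and "signed_clustered n X"
  shows "\<exists>\<V>. partition_on {..<n} \<V> \<and>
           (\<forall>i<n. \<forall>j<n. (\<forall>V\<in>\<V>. \<not> (i \<in> V \<and> j \<in> V)) \<longrightarrow> X $$ (i,j) = 0) \<and>
           (\<forall>V\<in>\<V>. (\<forall>i<card V. \<forall>j<card V. submatrix X V V $$ (i,j) \<noteq> 0)
                    \<and> social_balance (submatrix X V V))"
proof -
  obtain \<alpha> and c :: "nat \<Rightarrow> nat" and s where \<alpha>: "\<And>i. i < n \<Longrightarrow> \<alpha> (c i) > 0"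
    and s: "\<And>i. i < n \<Longrightarrow> \<bar>s i\<bar> = 1"
    and X_index: "\<And>i j. i < n \<Longrightarrow> j < n \<Longrightarrow> X $$ (i,j) = (if c i = c j then \<alpha> (c i) * s i * s j else 0)"
    using assms(2) by (elim signed_clusteredE) blast
  define C where "C i = {k. k < n \<and> c k = c i}" for i
  define \<V> where "\<V> = C ` {..<n}"
  have "partition_on {..<n} \<V>"
    by (rule partition_onI) (auto simp: \<V>_def C_def disjnt_def)
  moreover have "X $$ (i,j) = 0" if "i < n" "j < n" "\<forall>V\<in>\<V>. \<not> (i \<in> V \<and> j \<in> V)" for i j
    using that by (auto simp: X_index \<V>_def C_def)
  moreover have "(\<forall>k<card V. \<forall>l<card V. submatrix X V V $$ (k,l) \<noteq> 0) \<and> social_balance (submatrix X V V)"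
    if "V \<in> \<V>" for V
  proof -
    obtain i where i: "i < n" and V: "V = C i" using \<open>V \<in> \<V>\<close> by (auto simp: \<V>_def)
    have V_sub: "V \<subseteq> {..<n}" by (auto simp: V C_def)
    have pick_V: "pick V k < n \<and> c (pick V k) = c i" if "k < card V" for k
      using pick_in_set_le[OF that] by (auto simp: V C_def)
    have Z: "submatrix X V V $$ (k,l) = \<alpha> (c i) * s (pick V k) * s (pick V l)"
      if "k < card V" "l < card V" for k l
      using pick_V[OF that(1)] pick_V[OF that(2)]
      by (simp add: submatrix_square_index(2)[OF X V_sub that] X_index)
    have "social_balance (submatrix X V V)"
      by (rule social_balance_signed_rank_one[OF \<alpha>[OF i], where t = "\<lambda>k. s (pick V k)"])
        (use s pick_V Z in \<open>simp_all add: submatrix_square_index(1)[OF X V_sub]\<close>)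
    moreover have "submatrix X V V $$ (k,l) \<noteq> 0" if "k < card V" "l < card V" for k l
      using \<alpha>[OF i] s[OF pick_V[OF that(1), THEN conjunct1]] s[OF pick_V[OF that(2), THEN conjunct1]]
      by (auto simp: Z[OF that])
    ultimately show ?thesis by blast
  qed
  ultimately show ?thesis by blast
qed

lemma signed_clustered_reindex:
  assumes "signed_clustered m Y" and p: "\<And>i. i < n \<Longrightarrow> p i < m"
    and X: "\<And>i j. i < n \<Longrightarrow> j < n \<Longrightarrow> X $$ (i,j) = Y $$ (p i, p j)"
  shows "signed_clustered n X"
proof -
  obtain \<alpha> and c :: "nat \<Rightarrow> nat" and s where "\<And>i. i < m \<Longrightarrow> \<alpha> (c i) > 0"
    and "\<And>i. i < m \<Longrightarrow> \<bar>s i\<bar> = 1"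
    and "\<And>i j. i < m \<Longrightarrow> j < m \<Longrightarrow> Y $$ (i,j) = (if c i = c j then \<alpha> (c i) * s i * s j else 0)"
    using assms(1) by (elim signed_clusteredE) blast
  then show ?thesis
    by (intro signed_clusteredI[of n \<alpha> "c \<circ> p" "s \<circ> p"]) (simp_all add: p X)
qed

lemma signed_clustered_diag_block_mat:
  "\<forall>B\<in>set Bs. is_hbm_block B \<Longrightarrow> signed_clustered (sum_list (map dim_row Bs)) (diag_block_mat Bs)"
proof (induction Bs)
  case Nil
  then show ?case by (simp add: signed_clustered_def)
next
  case (Cons B Bs)
  define N where "N = sum_list (map dim_row Bs)"
  obtain \<alpha> and c :: "nat \<Rightarrow> nat" and s where \<alpha>: "\<And>i. i < N \<Longrightarrow> \<alpha> (c i) > 0"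
    and s: "\<And>i. i < N \<Longrightarrow> \<bar>s i\<bar> = 1"
    and D_index: "\<And>i j. i < N \<Longrightarrow> j < N \<Longrightarrow>
      diag_block_mat Bs $$ (i,j) = (if c i = c j then \<alpha> (c i) * s i * s j else 0)"
    using Cons.IH Cons.prems unfolding N_def by (auto elim!: signed_clusteredE)
  obtain \<beta> b where \<beta>: "\<beta> > 0" and b: "\<forall>i<dim_vec b. b $ i = 1 \<or> b $ i = -1"
    and B_def: "B = \<beta> \<cdot>\<^sub>m (mat (dim_vec b) (dim_vec b) (\<lambda>(i,j). b $ i * b $ j))"
    using Cons.prems by (auto simp: is_hbm_block_def)
  define m where "m = dim_vec b"
  have B: "B \<in> carrier_mat m m" by (simp add: B_def m_def)
  have D: "diag_block_mat Bs \<in> carrier_mat N N"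
    using diag_block_mat_hbm_carrier Cons.prems by (simp add: N_def)
  define c' where "c' i = (if i < m then 0 else Suc (c (i - m)))" for i
  define s' where "s' i = (if i < m then b $ i else s (i - m))" for i
  have "sum_list (map dim_row (B # Bs)) = m + N" using B by (simp add: N_def)
  moreover have "signed_clustered (m + N) (diag_block_mat (B # Bs))"
  proof (rule signed_clusteredI[of _ "case_nat \<beta> \<alpha>" c' s'])
    fix i assume "i < m + N"
    then show "case_nat \<beta> \<alpha> (c' i) > 0" and "\<bar>s' i\<bar> = 1"
      using \<alpha> s \<beta> b by (auto simp: c'_def s'_def m_def)
  next
    fix i j assume ij: "i < m + N" "j < m + N"
    have "m \<le> i \<Longrightarrow> i - m < N" "m \<le> j \<Longrightarrow> j - m < N" using ij by linarith+
    then show "diag_block_mat (B # Bs) $$ (i,j) =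
      (if c' i = c' j then case_nat \<beta> \<alpha> (c' i) * s' i * s' j else 0)"
      unfolding diag_block_mat_Cons_index[OF B D ij]
      by (cases "i < m"; cases "j < m") (simp_all add: D_index c'_def s'_def B_def m_def)
  qed
  ultimately show ?case by simp
qed

lemma Q_HbM_signed_clustered:
  assumes "X \<in> Q_HbM n"
  shows "X \<in> carrier_mat n n" and "signed_clustered n X"
proof -
  obtain P Bs where P: "is_perm_mat n P" and Bs: "\<forall>B\<in>set Bs. is_hbm_block B"
    and N: "sum_list (map dim_row Bs) = n"
    and X_P: "X = P * diag_block_mat Bs * P\<^sup>T" and "X \<in> S_nzrow n"
    using assms unfolding Q_HbM_def by auto
  then show "X \<in> carrier_mat n n" by (simp add: S_nzrow_def)
  obtain p where p: "p permutes {..<n}" and X: "X = perm_mat n p * diag_block_mat Bs * (perm_mat n p)\<^sup>T"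
    using P X_P unfolding is_perm_mat_def by auto
  have Y: "diag_block_mat Bs \<in> carrier_mat n n"
    using diag_block_mat_hbm_carrier[OF Bs] by (simp add: N)
  show "signed_clustered n X"
    by (rule signed_clustered_reindex[OF signed_clustered_diag_block_mat[OF Bs, unfolded N]])
      (use permutes_in_image[OF p] in \<open>auto simp: X perm_mat_conj_index[OF p Y]\<close>)
qed

lemma diag_block_mat_Cons_cluster_index:
  assumes D: "diag_block_mat Bs \<in> carrier_mat N N"
    and D_index: "\<And>k l. k < N \<Longrightarrow> l < N \<Longrightarrow> diag_block_mat Bs $$ (k,l) =
      (if c (q' k) = c (q' l) then \<alpha> (c (q' k)) * s (q' k) * s (q' l) else 0)"
    and e: "\<And>k. k < m \<Longrightarrow> c (e k) = r" and q': "\<And>k. k < N \<Longrightarrow> c (q' k) \<noteq> r"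
    and q: "\<And>k. q k = (if k < m then e k else q' (k - m))"
    and k: "k < m + N" and l: "l < m + N"
  shows "diag_block_mat (mat m m (\<lambda>(k,l). \<alpha> r * s (e k) * s (e l)) # Bs) $$ (k,l) =
    (if c (q k) = c (q l) then \<alpha> (c (q k)) * s (q k) * s (q l) else 0)"
proof -
  have B: "mat m m (\<lambda>(k,l). \<alpha> r * s (e k) * s (e l)) \<in> carrier_mat m m" by simp
  have "m \<le> k \<Longrightarrow> k - m < N" "m \<le> l \<Longrightarrow> l - m < N" using k l by linarith+
  then show ?thesis
    unfolding diag_block_mat_Cons_index[OF B D k l]
    using e[of k] e[of l] q'[of "k - m"] q'[of "l - m"] D_index by (auto simp: q)
qed

lemma signed_clusters_as_diag_block_mat:
  fixes c :: "nat \<Rightarrow> nat" and \<alpha> s :: "nat \<Rightarrow> real"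
  assumes "finite I" and "\<And>i. i \<in> I \<Longrightarrow> \<alpha> (c i) > 0 \<and> \<bar>s i\<bar> = 1"
  shows "\<exists>N q Bs. bij_betw q {..<N} I \<and> (\<forall>B\<in>set Bs. is_hbm_block B) \<and>
    sum_list (map dim_row Bs) = N \<and>
    (\<forall>k<N. \<forall>l<N. diag_block_mat Bs $$ (k,l) =
       (if c (q k) = c (q l) then \<alpha> (c (q k)) * s (q k) * s (q l) else 0))"
  using assms
proof (induction I rule: finite_psubset_induct)
  case (psubset I)
  show ?case
  proof (cases "I = {}")
    case True
    then show ?thesis by (intro exI[of _ 0] exI[of _ id] exI[of _ "[]"]) (auto simp: bij_betw_def)
  next
    case False
    then obtain i0 where i0: "i0 \<in> I" by auto
    define C where "C = {i \<in> I. c i = c i0}"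
    define R where "R = I - C"
    have R_sub: "R \<subset> I" using i0 by (auto simp: R_def C_def)
    have R_prems: "\<And>i. i \<in> R \<Longrightarrow> \<alpha> (c i) > 0 \<and> \<bar>s i\<bar> = 1"
      using psubset.prems by (auto simp: R_def)
    obtain N q' Bs where q': "bij_betw q' {..<N} R" and Bs: "\<forall>B\<in>set Bs. is_hbm_block B"
      and dim_Bs: "sum_list (map dim_row Bs) = N"
      and D_index: "\<forall>k<N. \<forall>l<N. diag_block_mat Bs $$ (k,l) =
        (if c (q' k) = c (q' l) then \<alpha> (c (q' k)) * s (q' k) * s (q' l) else 0)"
      using psubset.IH[OF R_sub R_prems] by blast
    define m where "m = card C"
    obtain e where e: "bij_betw e {..<m} C"
      using ex_bij_betw_nat_finite[of C] psubset.hyps by (auto simp: m_def C_def atLeast0LessThan)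
    have e_C: "e k \<in> I \<and> c (e k) = c i0" if "k < m" for k
      using e that by (auto simp: bij_betw_def C_def)
    have q'_R: "c (q' k) \<noteq> c i0" if "k < N" for k
      using q' that by (auto simp: bij_betw_def R_def C_def)
    have D: "diag_block_mat Bs \<in> carrier_mat N N"
      using diag_block_mat_hbm_carrier[OF Bs] by (simp add: dim_Bs)
    define q where "q k = (if k < m then e k else q' (k - m))" for k
    have "C \<union> R = I" by (auto simp: R_def C_def)
    then have q: "bij_betw q {..<m + N} I"
      using bij_betw_shift_combine[OF e q'] by (simp add: q_def[abs_def] R_def)
    define B where "B = mat m m (\<lambda>(k,l). \<alpha> (c i0) * s (e k) * s (e l))"
    have "is_hbm_block B"
      unfolding B_def using psubset.prems i0 e_C by (auto intro!: is_hbm_block_signed_rank_one)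
    moreover have "sum_list (map dim_row (B # Bs)) = m + N" using dim_Bs by (simp add: B_def)
    moreover have "diag_block_mat (B # Bs) $$ (k,l) =
        (if c (q k) = c (q l) then \<alpha> (c (q k)) * s (q k) * s (q l) else 0)"
      if "k < m + N" "l < m + N" for k l
      unfolding B_def
      by (rule diag_block_mat_Cons_cluster_index[where c = c and r = "c i0" and q' = q' and e = e, OF D _ _ q'_R q_def that])
        (use D_index e_C in auto)
    ultimately show ?thesis
      using q Bs by (intro exI[of _ "m + N"] exI[of _ q] exI[of _ "B # Bs"]) auto
  qed
qed

lemma signed_clustered_Q_HbM:
  assumes X: "X \<in> carrier_mat n n" and clustered: "signed_clustered n X"
  shows "X \<in> Q_HbM n"
proof -
  obtain \<alpha> and c :: "nat \<Rightarrow> nat" and s where \<alpha>: "\<And>i. i < n \<Longrightarrow> \<alpha> (c i) > 0"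
    and s: "\<And>i. i < n \<Longrightarrow> \<bar>s i\<bar> = 1"
    and X_index: "\<And>i j. i < n \<Longrightarrow> j < n \<Longrightarrow> X $$ (i,j) = (if c i = c j then \<alpha> (c i) * s i * s j else 0)"
    using clustered by (elim signed_clusteredE) blast
  obtain N q Bs where q: "bij_betw q {..<N} {..<n}" and Bs: "\<forall>B\<in>set Bs. is_hbm_block B"
    and dim_Bs: "sum_list (map dim_row Bs) = N"
    and Y_index: "\<forall>k<N. \<forall>l<N. diag_block_mat Bs $$ (k,l) =
      (if c (q k) = c (q l) then \<alpha> (c (q k)) * s (q k) * s (q l) else 0)"
    using signed_clusters_as_diag_block_mat[of "{..<n}" \<alpha> c s] \<alpha> s by auto
  have N: "N = n" using bij_betw_same_card[OF q] by simp
  define q' where "q' k = (if k < n then q k else k)" for k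
  have "bij_betw q' {..<n} {..<n}" using q N by (subst bij_betw_cong[where g = q]) (simp_all add: q'_def)
  then have "q' permutes {..<n}" by (rule bij_imp_permutes) (simp add: q'_def)
  define p where "p = Hilbert_Choice.inv q'" \<comment> \<open>plain \<open>inv\<close> is the group inverse of HOL-Algebra here\<close>
  have p: "p permutes {..<n}" and q'_p: "\<And>i. q' (p i) = i"
    unfolding p_def using \<open>q' permutes {..<n}\<close> by (simp_all add: permutes_inv)
  have p_n: "p i < n" if "i < n" for i using permutes_in_image[OF p] that by simp
  have Y: "diag_block_mat Bs \<in> carrier_mat n n"
    using diag_block_mat_hbm_carrier[OF Bs] by (simp add: dim_Bs N)
  have X_P: "X = perm_mat n p * diag_block_mat Bs * (perm_mat n p)\<^sup>T"
  proof (rule eq_matI)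
    fix i j assume "i < dim_row (perm_mat n p * diag_block_mat Bs * (perm_mat n p)\<^sup>T)"
      and "j < dim_col (perm_mat n p * diag_block_mat Bs * (perm_mat n p)\<^sup>T)"
    then have i: "i < n" and j: "j < n" by (simp_all add: perm_mat_def)
    have "q (p i) = i" "q (p j) = j" using q'_p[of i] q'_p[of j] p_n i j by (simp_all add: q'_def)
    then show "X $$ (i,j) = (perm_mat n p * diag_block_mat Bs * (perm_mat n p)\<^sup>T) $$ (i,j)"
      using Y_index p_n i j N by (simp add: perm_mat_conj_index[OF p Y i j] X_index)
  qed (use X in \<open>simp_all add: perm_mat_def\<close>)
  have "is_perm_mat n (perm_mat n p)" using p by (auto simp: is_perm_mat_def)
  moreover have "\<forall>B\<in>set Bs. is_hbm_block B \<and> dim_row B \<le> n"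
    using Bs dim_Bs N member_le_sum_list[of _ "map dim_row Bs"] by auto
  ultimately show ?thesis unfolding Q_HbM_def
    using dim_Bs N X_P signed_clustered_f_HbM_fixed(1)[OF X clustered]
    by (intro CollectI exI[of _ "perm_mat n p"] exI[of _ Bs] conjI) simp_all
qed

section \<open>Fixed points\<close>

lemma sum_sq_diff_sgn_inner:
  fixes x y :: "nat \<Rightarrow> real"
  assumes "(\<Sum>k<m. x k * y k) \<noteq> 0"
  shows "(\<Sum>k<m. (x k - sgn (\<Sum>k<m. x k * y k) * y k)\<^sup>2) =
    (\<Sum>k<m. (x k)\<^sup>2) + (\<Sum>k<m. (y k)\<^sup>2) - 2 * \<bar>\<Sum>k<m. x k * y k\<bar>"
proof -
  define \<sigma> where "\<sigma> = sgn (\<Sum>k<m. x k * y k)"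
  have \<sigma>: "\<sigma> * \<sigma> = 1" "\<sigma> * (\<Sum>k<m. x k * y k) = \<bar>\<Sum>k<m. x k * y k\<bar>"
    using assms by (auto simp: \<sigma>_def sgn_if)
  have "(\<Sum>k<m. (x k - \<sigma> * y k)\<^sup>2) =
      (\<Sum>k<m. (x k)\<^sup>2) + \<sigma> * \<sigma> * (\<Sum>k<m. (y k)\<^sup>2) - 2 * (\<sigma> * (\<Sum>k<m. x k * y k))"
    by (simp add: power2_eq_square algebra_simps sum.distrib sum_subtractf sum_distrib_left)
  then show ?thesis unfolding \<sigma>_def[symmetric] by (simp only: \<sigma>)
qed

lemma gram_rows_parallel:
  fixes x :: "nat \<Rightarrow> nat \<Rightarrow> real"
  assumes M_def: "\<And>i j. M i j = (\<Sum>k<m. x i k * x j k)"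
    and rows: "\<And>i. i < n \<Longrightarrow> (\<Sum>j<n. (M i j)\<^sup>2) = M i i * (\<Sum>j<n. \<bar>M i j\<bar>)"
    and i: "i < n" and j: "j < n" and M_ij: "M i j \<noteq> 0"
  shows "\<forall>k<m. x i k = sgn (M i j) * x j k"
proof -
  define T where "T i j = \<bar>M i j\<bar> * (M i i + M j j - 2 * \<bar>M i j\<bar>)" for i j
  have gap: "M i i + M j j - 2 * \<bar>M i j\<bar> = (\<Sum>k<m. (x i k - sgn (M i j) * x j k)\<^sup>2)"
    if "M i j \<noteq> 0" for i j
    using sum_sq_diff_sgn_inner[of "x i" "x j" m] that by (simp add: M_def power2_eq_square)
  have T_nonneg: "T i j \<ge> 0" for i j
    by (cases "M i j = 0") (simp_all add: T_def gap sum_nonneg)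
  have M_sym: "M i j = M j i" for i j by (simp add: M_def mult.commute)
  have T_expand: "T i j = M i i * \<bar>M i j\<bar> + M j j * \<bar>M i j\<bar> - (M i j)\<^sup>2 - (M i j)\<^sup>2" for i j
    by (simp add: T_def algebra_simps power2_eq_square)
  have swap: "(\<Sum>i<n. \<Sum>j<n. M j j * \<bar>M i j\<bar>) = (\<Sum>i<n. \<Sum>j<n. M i i * \<bar>M i j\<bar>)"
    by (subst sum.swap) (simp add: M_sym)
  have diag: "(\<Sum>i<n. \<Sum>j<n. M i i * \<bar>M i j\<bar>) = (\<Sum>i<n. \<Sum>j<n. (M i j)\<^sup>2)"
    by (rule sum.cong) (simp_all add: rows sum_distrib_left[symmetric])
  have "(\<Sum>i<n. \<Sum>j<n. T i j) = 0"
    unfolding T_expand sum_subtractf sum.distrib swap diag by simp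
  then have "T i j = 0"
    using i j T_nonneg by (simp add: sum_nonneg_eq_0_iff sum_nonneg)
  then have "(\<Sum>k<m. (x i k - sgn (M i j) * x j k)\<^sup>2) = 0"
    using M_ij by (simp add: T_def gap[OF M_ij, symmetric])
  then show ?thesis by (simp add: sum_nonneg_eq_0_iff)
qed

lemma S_nzrow_carrier: "X \<in> S_nzrow n \<Longrightarrow> X \<in> carrier_mat n n"
  by (simp add: S_nzrow_def)

lemma S_nzrow_row_nonzero:
  assumes "X \<in> S_nzrow n" and i: "i < n"
  obtains k where "k < n" and "X $$ (i,k) \<noteq> 0"
proof -
  have "row X i \<noteq> 0\<^sub>v n" using assms by (simp add: S_nzrow_def)
  then have "\<exists>k<n. X $$ (i,k) \<noteq> 0"
    using S_nzrow_carrier[OF assms(1)] i by auto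
  then show ?thesis using that by blast
qed

lemma S_nzrow_row_abs_sum_pos:
  assumes "X \<in> S_nzrow n" and "i < n"
  shows "(\<Sum>k<n. \<bar>X $$ (i,k)\<bar>) > 0"
proof -
  obtain k where "k < n" "X $$ (i,k) \<noteq> 0" using S_nzrow_row_nonzero[OF assms] .
  then show ?thesis by (intro sum_pos2[of _ k]) auto
qed

lemma f_HbM_fixed_gram:
  assumes XS: "X \<in> S_nzrow n" and F: "f_HbM X = X" and i: "i < n" and j: "j < n"
  shows "(\<Sum>k<n. X $$ (i,k) * X $$ (j,k)) = (\<Sum>k<n. \<bar>X $$ (i,k)\<bar>) * X $$ (i,j)"
  using f_HbM_index[OF S_nzrow_carrier[OF XS] i j] S_nzrow_row_abs_sum_pos[OF XS i]
  by (simp add: F field_simps)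

lemma f_HbM_fixed_diag_pos:
  assumes XS: "X \<in> S_nzrow n" and F: "f_HbM X = X" and i: "i < n"
  shows "X $$ (i,i) > 0"
proof -
  obtain k where "k < n" "X $$ (i,k) \<noteq> 0" using S_nzrow_row_nonzero[OF XS i] .
  then have "(\<Sum>k<n. X $$ (i,k) * X $$ (i,k)) > 0"
    by (intro sum_pos2[of _ k]) (auto simp: zero_less_mult_iff)
  then show ?thesis
    using f_HbM_fixed_gram[OF XS F i i] S_nzrow_row_abs_sum_pos[OF XS i]
    by (simp add: zero_less_mult_iff)
qed

lemma f_HbM_fixed_rows_parallel:
  assumes XS: "X \<in> S_nzrow n" and F: "f_HbM X = X" and i: "i < n" and j: "j < n"
    and X_ij: "X $$ (i,j) \<noteq> 0"
  shows "\<forall>k<n. X $$ (i,k) = sgn (X $$ (i,j)) * X $$ (j,k)"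
proof -
  define d where "d i = (\<Sum>k<n. \<bar>X $$ (i,k)\<bar>)" for i
  define M where "M i j = (\<Sum>k<n. X $$ (i,k) * X $$ (j,k))" for i j
  have d: "d i > 0" if "i < n" for i using S_nzrow_row_abs_sum_pos[OF XS that] by (simp add: d_def)
  have M: "M i j = d i * X $$ (i,j)" if "i < n" "j < n" for i j
    using f_HbM_fixed_gram[OF XS F that] by (simp add: M_def d_def)
  have rows: "(\<Sum>j<n. (M i j)\<^sup>2) = M i i * (\<Sum>j<n. \<bar>M i j\<bar>)" if i: "i < n" for i
  proof -
    have "(\<Sum>j<n. (M i j)\<^sup>2) = (\<Sum>j<n. d i * d i * (X $$ (i,j) * X $$ (i,j)))"
      using i by (intro sum.cong) (simp_all add: M power2_eq_square)
    also have "\<dots> = d i * d i * M i i" by (simp add: M_def sum_distrib_left)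
    finally have "(\<Sum>j<n. (M i j)\<^sup>2) = d i * d i * M i i" .
    moreover have "(\<Sum>j<n. \<bar>M i j\<bar>) = d i * d i"
      using i d[OF i] by (simp add: M abs_mult sum_distrib_left d_def)
    ultimately show ?thesis by simp
  qed
  have M_ij: "M i j \<noteq> 0" and sgn_M: "sgn (M i j) = sgn (X $$ (i,j))"
    using M[OF i j] d[OF i] X_ij by (simp_all add: sgn_mult)
  show ?thesis
    using gram_rows_parallel[where x = "\<lambda>i k. X $$ (i,k)" and M = M, OF M_def rows i j M_ij]
    by (simp add: sgn_M)
qed

lemma f_HbM_fixed_col_scale:
  assumes XS: "X \<in> S_nzrow n" and F: "f_HbM X = X" and i: "i < n" and i': "i' < n" and j: "j < n"
    and rows: "\<forall>k<n. X $$ (i,k) = \<sigma> * X $$ (i',k)"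
  shows "X $$ (j,i) = \<sigma> * X $$ (j,i')"
proof -
  have "(\<Sum>k<n. X $$ (j,k) * X $$ (i,k)) = \<sigma> * (\<Sum>k<n. X $$ (j,k) * X $$ (i',k))"
    using rows by (simp add: sum_distrib_left algebra_simps)
  then show ?thesis
    using f_HbM_fixed_gram[OF XS F j i] f_HbM_fixed_gram[OF XS F j i'] S_nzrow_row_abs_sum_pos[OF XS j]
    by simp
qed

definition rows_eq_up_to_sign :: "nat \<Rightarrow> real mat \<Rightarrow> nat \<Rightarrow> nat \<Rightarrow> bool" where
  "rows_eq_up_to_sign n X i r \<longleftrightarrow> (\<exists>\<sigma>. \<bar>\<sigma>\<bar> = 1 \<and> (\<forall>k<n. X $$ (i,k) = \<sigma> * X $$ (r,k)))"

lemma rows_eq_up_to_sign_refl: "rows_eq_up_to_sign n X i i"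
  unfolding rows_eq_up_to_sign_def by (intro exI[of _ 1]) simp

lemma rows_eq_up_to_sign_sym:
  assumes "rows_eq_up_to_sign n X i j"
  shows "rows_eq_up_to_sign n X j i"
proof -
  obtain \<sigma> where \<sigma>: "\<bar>\<sigma>\<bar> = 1" and ij: "\<forall>k<n. X $$ (i,k) = \<sigma> * X $$ (j,k)"
    using assms unfolding rows_eq_up_to_sign_def by blast
  have "X $$ (j,k) = \<sigma> * X $$ (i,k)" if "k < n" for k
    using ij that abs_eq_1_mult_self[OF \<sigma>] by (simp add: mult.assoc[symmetric])
  then show ?thesis unfolding rows_eq_up_to_sign_def using \<sigma> by blast
qed
lemma rows_eq_up_to_sign_trans:
  assumes "rows_eq_up_to_sign n X i j" and "rows_eq_up_to_sign n X j r"
  shows "rows_eq_up_to_sign n X i r"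
proof -
  obtain \<sigma> \<tau> where "\<bar>\<sigma>\<bar> = 1" "\<forall>k<n. X $$ (i,k) = \<sigma> * X $$ (j,k)"
    and "\<bar>\<tau>\<bar> = 1" "\<forall>k<n. X $$ (j,k) = \<tau> * X $$ (r,k)"
    using assms unfolding rows_eq_up_to_sign_def by blast
  then show ?thesis unfolding rows_eq_up_to_sign_def
    by (intro exI[of _ "\<sigma> * \<tau>"]) (simp add: abs_mult)
qed

text \<open>The clusters are the classes of rows equal up to sign, each labelled by its least row.\<close>
lemma f_HbM_fixed_signed_clustered:
  assumes XS: "X \<in> S_nzrow n" and F: "f_HbM X = X"
  shows "signed_clustered n X"
proof -
  define c where "c i = (LEAST r. rows_eq_up_to_sign n X i r)" for i
  define s where "s i = (SOME \<sigma>. \<bar>\<sigma>\<bar> = 1 \<and> (\<forall>k<n. X $$ (i,k) = \<sigma> * X $$ (c i,k)))" for i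
  have c_le: "c i \<le> i" for i unfolding c_def by (rule Least_le) (rule rows_eq_up_to_sign_refl)
  have "rows_eq_up_to_sign n X i (c i)" for i
    unfolding c_def by (rule LeastI) (rule rows_eq_up_to_sign_refl)
  then have "\<bar>s i\<bar> = 1 \<and> (\<forall>k<n. X $$ (i,k) = s i * X $$ (c i,k))" for i
    unfolding s_def rows_eq_up_to_sign_def by (rule someI_ex)
  then have s_abs: "\<bar>s i\<bar> = 1" and s_row: "\<forall>k<n. X $$ (i,k) = s i * X $$ (c i,k)" for i
    by blast+
  have c_eq: "c i = c j" if ij: "rows_eq_up_to_sign n X i j" for i j
  proof -
    have "rows_eq_up_to_sign n X i r \<longleftrightarrow> rows_eq_up_to_sign n X j r" for r
      using rows_eq_up_to_sign_trans[OF ij] rows_eq_up_to_sign_trans[OF rows_eq_up_to_sign_sym[OF ij]]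
      by blast
    then show ?thesis by (simp add: c_def)
  qed
  have X_index: "X $$ (i,j) = (if c i = c j then X $$ (c i, c i) * s i * s j else 0)"
    if i: "i < n" and j: "j < n" for i j
  proof (cases "c i = c j")
    case True
    have "c i < n" "c j < n" using c_le[of i] c_le[of j] i j by linarith+
    then have "X $$ (c i, j) = s j * X $$ (c i, c j)"
      by (intro f_HbM_fixed_col_scale[OF XS F j _ _ s_row])
    then show ?thesis using s_row[of i] j True by simp
  next
    case False
    have "X $$ (i,j) = 0"
    proof (rule ccontr)
      assume "X $$ (i,j) \<noteq> 0"
      then have "rows_eq_up_to_sign n X i j"
        unfolding rows_eq_up_to_sign_def using f_HbM_fixed_rows_parallel[OF XS F i j]
        by (intro exI[of _ "sgn (X $$ (i,j))"]) (simp add: abs_sgn)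
      then show False using c_eq False by blast
    qed
    then show ?thesis using False by simp
  qed
  show ?thesis
  proof (rule signed_clusteredI[of n "\<lambda>r. X $$ (r,r)" c s])
    fix i assume "i < n"
    then show "X $$ (c i, c i) > 0" using f_HbM_fixed_diag_pos[OF XS F] c_le[of i] by simp
  qed (use s_abs X_index in auto)
qed

theorem theorem3p4:
  fixes n :: nat
  shows "Q_HbM n = {X \<in> S_nzrow n. f_HbM X = X} \<and>
         (\<forall>X\<in>Q_HbM n. \<exists>\<V>. partition_on {..<n} \<V> \<and>
           (\<forall>i<n. \<forall>j<n. (\<forall>V\<in>\<V>. \<not> (i \<in> V \<and> j \<in> V)) \<longrightarrow> X $$ (i,j) = 0) \<and>
           (\<forall>V\<in>\<V>. (\<forall>i<card V. \<forall>j<card V. submatrix X V V $$ (i,j) \<noteq> 0)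
                    \<and> social_balance (submatrix X V V)))"
proof (intro conjI ballI)
  show "Q_HbM n = {X \<in> S_nzrow n. f_HbM X = X}"
  proof (intro equalityI subsetI)
    fix X assume "X \<in> Q_HbM n"
    then show "X \<in> {X \<in> S_nzrow n. f_HbM X = X}"
      using signed_clustered_f_HbM_fixed[OF Q_HbM_signed_clustered] by blast
  next
    fix X assume "X \<in> {X \<in> S_nzrow n. f_HbM X = X}"
    then have XS: "X \<in> S_nzrow n" and F: "f_HbM X = X" by auto
    show "X \<in> Q_HbM n"
      by (rule signed_clustered_Q_HbM[OF S_nzrow_carrier[OF XS] f_HbM_fixed_signed_clustered[OF XS F]])
  qed
next
  fix X assume "X \<in> Q_HbM n"
  then show "\<exists>\<V>. partition_on {..<n} \<V> \<and>
      (\<forall>i<n. \<forall>j<n. (\<forall>V\<in>\<V>. \<not> (i \<in> V \<and> j \<in> V)) \<longrightarrow> X $$ (i,j) = 0) \<and>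
      (\<forall>V\<in>\<V>. (\<forall>i<card V. \<forall>j<card V. submatrix X V V $$ (i,j) \<noteq> 0)
               \<and> social_balance (submatrix X V V))"
    by (intro signed_clustered_balanced_partition Q_HbM_signed_clustered)
qed

end
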